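(* Let $r\ge 3$ and $k\ge 2$ be integers and $n=2k\cdot 3^{r-1}$. Then there exists an $r$-regular word of length $n$ over a three-letter alphabet.
   Context: For a word $u=u_1\cdots u_m$ over an alphabet $\mathcal A$ with $b$ letters and an integer $r\ge -1$, $u$ is $r$-regular if for every $k=0,1,\dots,r$ the sum $\sum_{1\le t\le m,\ u_t=c} t^k$ is the same for all letters $c\in\mathcal A$ (a letter not occurring contributes $0$). Here $b=3$. *)

theory Defs
  imports Main
begin

text \<open>A word u = u_1 ... u_m is a list (u ! (t-1) = u_t). For an alphabet A,
 u is r-regular if for every k = 0..r the power sums of positions of each letter
 coincide for all letters of A.\<close>

definition power_sum :: "'a list \<Rightarrow> 'a \<Rightarrow> nat \<Rightarrow> nat" where
  "power_sum u c k = (\<Sum>t\<in>{t. 1 \<le> t \<and> t \<le> length u \<and> u ! (t - 1) = c}. t ^ k)"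

definition regular_word :: "'a set \<Rightarrow> int \<Rightarrow> 'a list \<Rightarrow> bool" where
  "regular_word A r u \<longleftrightarrow> set u \<subseteq> A \<and>
     (\<forall>k::nat. int k \<le> r \<longrightarrow> (\<forall>c\<in>A. \<forall>d\<in>A. power_sum u c k = power_sum u d k))"

end

theory Submission
  imports Defs "HOL-Number_Theory.Cong"
begin

text \<open>
  Regularity is preserved by concatenation and by injective renaming of the letters. Over the
  alphabet \<open>{0..<b}\<close>, Prouhet's construction, which concatenates the images of \<open>w\<close> under the
  \<open>b\<close> cyclic shifts \<open>x \<mapsto> (x + i) mod b\<close>, raises the regularity by one: by the binomial
  theorem the degree \<open>k\<close> power sums of the shifted blocks differ from the unshifted ones by
  terms of lower degree, which agree for all letters, and the unshifted degree \<open>k\<close> terms add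
  up to the same value for every letter, since for all letters \<open>x\<close> and \<open>c\<close> exactly one of the
  shifts maps \<open>x\<close> to \<open>c\<close>. Starting from a 1-regular ternary word of length 6 and a
  3-regular one of length 36 this gives \<open>r\<close>-regular words of lengths \<open>6 * 3 ^ (r - 1)\<close> and
  \<open>4 * 3 ^ (r - 1)\<close>, and concatenations of these realise every length \<open>2 * k * 3 ^ (r - 1)\<close>
  with \<open>k \<ge> 2\<close>.
\<close>

definition shifted_power_sum :: "nat \<Rightarrow> 'a list \<Rightarrow> 'a \<Rightarrow> nat \<Rightarrow> nat" where
  "shifted_power_sum s u c k = (\<Sum>t<length u. if u ! t = c then (s + t + 1) ^ k else 0)"

lemma power_sum_eq_shifted_power_sum: "power_sum u c k = shifted_power_sum 0 u c k"
proof -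
  have "power_sum u c k = (\<Sum>t\<in>{1..length u}. if u ! (t - 1) = c then t ^ k else 0)"
    unfolding power_sum_def by (subst sum.inter_filter[symmetric]) (auto intro: sum.cong)
  also have "\<dots> = shifted_power_sum 0 u c k"
    unfolding shifted_power_sum_def by (simp add: sum.atLeast1_atMost_eq cong: if_cong)
  finally show ?thesis .
qed

lemma shifted_power_sum_append:
  "shifted_power_sum s (u @ v) c k = shifted_power_sum s u c k + shifted_power_sum (s + length u) v c k"
proof -
  have split: "(\<Sum>t<m + n. f t) = (\<Sum>t<m. f t) + (\<Sum>t<n. f (m + t))" for m n and f :: "nat \<Rightarrow> nat"
    by (induction n) auto
  show ?thesis
    unfolding shifted_power_sum_def length_append split by (simp add: nth_append ac_simps cong: if_cong)
qed

lemma shifted_power_sum_Cons: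
  "shifted_power_sum s (x # u) c k = (if x = c then (s + 1) ^ k else 0) + shifted_power_sum (s + 1) u c k"
  using shifted_power_sum_append[of s "[x]" u c k] by (simp add: shifted_power_sum_def)

lemma shifted_power_sum_concat:
  assumes "\<forall>v\<in>set vs. length v = m"
  shows "shifted_power_sum s (concat vs) c k = (\<Sum>i<length vs. shifted_power_sum (s + i * m) (vs ! i) c k)"
  using assms
proof (induction vs arbitrary: s)
  case Nil
  then show ?case by (simp add: shifted_power_sum_def)
next
  case (Cons v vs)
  then show ?case
    unfolding length_Cons sum.lessThan_Suc_shift by (simp add: shifted_power_sum_append ac_simps)
qed

lemma shifted_power_sum_binomial:
  "shifted_power_sum s u c k = (\<Sum>j\<le>k. (k choose j) * s ^ (k - j) * power_sum u c j)"
proof -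
  have "(s + t + 1) ^ k = (\<Sum>j\<le>k. (k choose j) * s ^ (k - j) * (t + 1) ^ j)" for t
    using binomial_ring[of "t + 1" s k] by (simp add: ac_simps)
  then have "shifted_power_sum s u c k =
      (\<Sum>t<length u. \<Sum>j\<le>k. (k choose j) * s ^ (k - j) * (if u ! t = c then (t + 1) ^ j else 0))"
    unfolding shifted_power_sum_def by (intro sum.cong) simp_all
  also have "\<dots> = (\<Sum>j\<le>k. (k choose j) * s ^ (k - j) * power_sum u c j)"
    unfolding power_sum_eq_shifted_power_sum shifted_power_sum_def
    by (subst sum.swap) (simp add: sum_distrib_left cong: if_cong)
  finally show ?thesis .
qed

lemma power_sum_append:
  "power_sum (u @ v) c k = power_sum u c k + (\<Sum>j\<le>k. (k choose j) * length u ^ (k - j) * power_sum v c j)"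
  using shifted_power_sum_binomial[of "length u" v c k]
  by (simp add: power_sum_eq_shifted_power_sum shifted_power_sum_append)

lemma power_sum_map:
  assumes "inj_on f (insert c (set u))"
  shows "power_sum (map f u) (f c) k = power_sum u c k"
proof -
  have "f (u ! t) = f c \<longleftrightarrow> u ! t = c" if "t < length u" for t
    using assms nth_mem[OF that] by (metis inj_onD insertCI)
  then show ?thesis
    unfolding power_sum_eq_shifted_power_sum shifted_power_sum_def by (intro sum.cong) auto
qed

lemma regular_wordD:
  "regular_word A r u \<Longrightarrow> int k \<le> r \<Longrightarrow> c \<in> A \<Longrightarrow> d \<in> A \<Longrightarrow>
    power_sum u c k = power_sum u d k"
  unfolding regular_word_def by blast

lemma regular_word_int_iff:
  "regular_word A (int r) u \<longleftrightarrow>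
    set u \<subseteq> A \<and> (\<forall>k\<in>{..r}. \<forall>c\<in>A. \<forall>d\<in>A. power_sum u c k = power_sum u d k)"
  by (auto simp: regular_word_def)

lemma regular_word_Nil: "regular_word A r []"
  by (simp add: regular_word_def power_sum_eq_shifted_power_sum shifted_power_sum_def)

lemma regular_word_append:
  assumes u: "regular_word A r u" and v: "regular_word A r v"
  shows "regular_word A r (u @ v)"
  unfolding regular_word_def
proof (intro conjI allI impI ballI)
  show "set (u @ v) \<subseteq> A"
    using u v by (simp add: regular_word_def)
next
  fix k c d assume k: "int k \<le> r" and cd: "c \<in> A" "d \<in> A"
  have "(\<Sum>j\<le>k. (k choose j) * length u ^ (k - j) * power_sum v c j)
      = (\<Sum>j\<le>k. (k choose j) * length u ^ (k - j) * power_sum v d j)"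
    using k by (intro sum.cong refl) (simp add: regular_wordD[OF v _ cd])
  then show "power_sum (u @ v) c k = power_sum (u @ v) d k"
    by (simp add: power_sum_append regular_wordD[OF u k cd])
qed

lemma regular_word_concat_replicate:
  "regular_word A r u \<Longrightarrow> regular_word A r (concat (replicate n u))"
  by (induction n) (auto intro: regular_word_Nil regular_word_append)

lemma regular_word_map:
  assumes u: "regular_word A r u" and f: "inj_on f A"
  shows "regular_word (f ` A) r (map f u)"
  unfolding regular_word_def
proof (intro conjI allI impI ballI)
  have set_u: "set u \<subseteq> A"
    using u by (simp add: regular_word_def)
  then show "set (map f u) \<subseteq> f ` A"
    by auto
  fix k c' d' assume k: "int k \<le> r" and "c' \<in> f ` A" "d' \<in> f ` A"
  then obtain c d where cd: "c \<in> A" "d \<in> A" "c' = f c" "d' = f d"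
    by blast
  have "power_sum (map f u) (f e) k = power_sum u e k" if "e \<in> A" for e
    using set_u that by (intro power_sum_map inj_on_subset[OF f]) auto
  then show "power_sum (map f u) c' k = power_sum (map f u) d' k"
    using cd regular_wordD[OF u k cd(1,2)] by simp
qed

definition prouhet_word :: "(nat \<Rightarrow> 'a \<Rightarrow> 'a) \<Rightarrow> nat \<Rightarrow> 'a list \<Rightarrow> 'a list" where
  "prouhet_word \<sigma> n w = concat (map (\<lambda>i. map (\<sigma> i) w) [0..<n])"

lemma length_prouhet_word: "length (prouhet_word \<sigma> n w) = n * length w"
  by (simp add: prouhet_word_def length_concat o_def sum_list_triv)

lemma power_sum_prouhet_word:
  "power_sum (prouhet_word \<sigma> n w) c k =
     (\<Sum>i<n. \<Sum>j\<le>k. (k choose j) * (i * length w) ^ (k - j) * power_sum (map (\<sigma> i) w) c j)"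
proof -
  have "power_sum (prouhet_word \<sigma> n w) c k =
      (\<Sum>i<n. shifted_power_sum (i * length w) (map (\<sigma> i) w) c k)"
    unfolding power_sum_eq_shifted_power_sum prouhet_word_def
    by (subst shifted_power_sum_concat[where m = "length w"]) auto
  then show ?thesis
    by (simp only: shifted_power_sum_binomial)
qed

lemma sum_power_sum_map_latin:
  fixes \<sigma> :: "nat \<Rightarrow> 'a \<Rightarrow> 'a"
  assumes "set w \<subseteq> A" and latin: "\<forall>x\<in>A. card {i. i < n \<and> \<sigma> i x = c} = 1"
  shows "(\<Sum>i<n. power_sum (map (\<sigma> i) w) c k) = (\<Sum>t<length w. (t + 1) ^ k)"
proof -
  have "(\<Sum>i<n. power_sum (map (\<sigma> i) w) c k)
      = (\<Sum>t<length w. \<Sum>i<n. if \<sigma> i (w ! t) = c then (t + 1) ^ k else 0)"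
    unfolding power_sum_eq_shifted_power_sum shifted_power_sum_def
    by (subst sum.swap) (simp cong: if_cong)
  also have "\<dots> = (\<Sum>t<length w. card {i. i < n \<and> \<sigma> i (w ! t) = c} * (t + 1) ^ k)"
  proof (intro sum.cong refl)
    fix t
    have "(\<Sum>i<n. if \<sigma> i (w ! t) = c then (t + 1) ^ k else 0)
        = (\<Sum>i\<in>{i \<in> {..<n}. \<sigma> i (w ! t) = c}. (t + 1) ^ k)"
      by (subst sum.inter_filter) simp_all
    then show "(\<Sum>i<n. if \<sigma> i (w ! t) = c then (t + 1) ^ k else 0)
        = card {i. i < n \<and> \<sigma> i (w ! t) = c} * (t + 1) ^ k"
      by simp
  qed
  also have "\<dots> = (\<Sum>t<length w. (t + 1) ^ k)"
    using latin subsetD[OF assms(1) nth_mem] by (intro sum.cong) auto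
  finally show ?thesis .
qed

lemma regular_word_prouhet_word:
  fixes \<sigma> :: "nat \<Rightarrow> 'a \<Rightarrow> 'a"
  assumes w: "regular_word A r w"
    and perm: "\<forall>i<n. bij_betw (\<sigma> i) A A"
    and latin: "\<forall>x\<in>A. \<forall>c\<in>A. card {i. i < n \<and> \<sigma> i x = c} = 1"
  shows "regular_word A (r + 1) (prouhet_word \<sigma> n w)"
  unfolding regular_word_def
proof (intro conjI allI impI ballI)
  have set_w: "set w \<subseteq> A"
    using w by (simp add: regular_word_def)
  then show "set (prouhet_word \<sigma> n w) \<subseteq> A"
    using perm by (fastforce simp: prouhet_word_def dest: bij_betwE)
  have blocks: "regular_word A r (map (\<sigma> i) w)" if "i < n" for i
    using regular_word_map[OF w, of "\<sigma> i"] perm that by (simp add: bij_betw_def)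
  fix k c d assume k: "int k \<le> r + 1" and cd: "c \<in> A" "d \<in> A"
  define lower where "lower e = (\<Sum>i<n. \<Sum>j<k. (k choose j) * (i * length w) ^ (k - j)
      * power_sum (map (\<sigma> i) w) e j)" for e
  have split: "power_sum (prouhet_word \<sigma> n w) e k =
      lower e + (\<Sum>i<n. power_sum (map (\<sigma> i) w) e k)" for e
    unfolding power_sum_prouhet_word lower_def
    by (simp add: lessThan_Suc_atMost[symmetric] sum.distrib)
  have "lower c = lower d"
    unfolding lower_def using k by (intro sum.cong refl) (simp add: regular_wordD[OF blocks _ cd])
  moreover have "(\<Sum>i<n. power_sum (map (\<sigma> i) w) e k) = (\<Sum>t<length w. (t + 1) ^ k)" if "e \<in> A" for e
    using sum_power_sum_map_latin[OF set_w] latin that by blast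
  ultimately show "power_sum (prouhet_word \<sigma> n w) c k = power_sum (prouhet_word \<sigma> n w) d k"
    using cd by (simp add: split)
qed

lemma length_funpow_prouhet_word: "length ((prouhet_word \<sigma> n ^^ m) w) = n ^ m * length w"
  by (induction m) (simp_all add: length_prouhet_word)

lemma bij_betw_add_mod: "bij_betw (\<lambda>x. (x + a) mod b) {..<b} {..<b :: nat}"
proof -
  have "inj_on (\<lambda>x. (x + a) mod b) {..<b}"
  proof (rule inj_onI)
    fix x y assume "x \<in> {..<b}" "y \<in> {..<b}" "(x + a) mod b = (y + a) mod b"
    then show "x = y"
      using cong_add_rcancel_nat[of x a y b] cong_less_modulus_unique_nat[of x y b] by (simp add: cong_def)
  qed
  moreover have "(\<lambda>x. (x + a) mod b) ` {..<b} \<subseteq> {..<b}"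
    by auto
  ultimately show ?thesis
    unfolding bij_betw_def by (simp add: endo_inj_surj)
qed

lemma card_add_mod_eq_1:
  fixes b c x :: nat
  assumes "c < b"
  shows "card {i. i < b \<and> (x + i) mod b = c} = 1"
proof -
  have bij: "bij_betw (\<lambda>i. (i + x) mod b) {..<b} {..<b}"
    by (rule bij_betw_add_mod)
  then obtain i where i: "i \<in> {..<b}" "c = (i + x) mod b"
    using assms bij_betw_imp_surj_on[OF bij] by blast
  have "{i. i < b \<and> (x + i) mod b = c} = {i}"
  proof (intro equalityI subsetI)
    fix j assume "j \<in> {i. i < b \<and> (x + i) mod b = c}"
    then show "j \<in> {i}"
      using i inj_onD[OF bij_betw_imp_inj_on[OF bij], of j i] by (simp add: add.commute)
  qed (use i in \<open>simp add: add.commute\<close>)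
  then show ?thesis
    by simp
qed

lemma regular_word_cyclic_prouhet_word:
  "regular_word {..<b} r w \<Longrightarrow>
     regular_word {..<b} (r + 1) (prouhet_word (\<lambda>i x. (x + i) mod b) b w)"
  by (rule regular_word_prouhet_word) (simp_all add: bij_betw_add_mod card_add_mod_eq_1)

lemma regular_word_funpow_cyclic_prouhet_word:
  "regular_word {..<b} r w \<Longrightarrow>
     regular_word {..<b} (r + int m) ((prouhet_word (\<lambda>i x. (x + i) mod b) b ^^ m) w)"
proof (induction m)
  case (Suc m)
  then show ?case
    using regular_word_cyclic_prouhet_word[OF Suc.IH] by (simp add: ac_simps)
qed simp

lemma regular_word_012210: "regular_word {..<3} (int 1) [0, 1, 2, 2, 1, 0 :: nat]"
  unfolding regular_word_int_iff
  by (simp add: power_sum_eq_shifted_power_sum shifted_power_sum_Cons shifted_power_sum_def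
      lessThan_nat_numeral del: One_nat_def) (simp add: atMost_Suc)

lemma regular_word_ternary_36:
  "regular_word {..<3} (int 3) [2, 1, 2, 1, 0, 0, 0, 0, 0, 1, 2, 1, 1, 2, 1, 2, 2, 2,
     2, 1, 0, 0, 1, 0, 2, 0, 1, 0, 1, 2, 0, 2, 1, 1, 0, 2 :: nat]"
  unfolding regular_word_int_iff
  by (simp add: power_sum_eq_shifted_power_sum shifted_power_sum_Cons shifted_power_sum_def
      lessThan_nat_numeral atMost_nat_numeral del: One_nat_def) (simp add: atMost_Suc)

lemma exists_regular_word_cyclic_prouhet:
  assumes "regular_word {..<b} (int r0) w" and "length w = m" and "r0 \<le> r"
  shows "\<exists>w'. length w' = b ^ (r - r0) * m \<and> regular_word {..<b} (int r) w'"
proof -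
  let ?w' = "(prouhet_word (\<lambda>i x. (x + i) mod b) b ^^ (r - r0)) w"
  have "regular_word {..<b} (int r0 + int (r - r0)) ?w'"
    by (rule regular_word_funpow_cyclic_prouhet_word[OF assms(1)])
  moreover have "int r0 + int (r - r0) = int r"
    using assms(3) by simp
  ultimately show ?thesis
    by (metis assms(2) length_funpow_prouhet_word)
qed

lemma exists_regular_word_ternary:
  fixes r k :: nat
  assumes "3 \<le> r" "2 \<le> k"
  shows "\<exists>w. length w = 2 * k * 3 ^ (r - 1) \<and> regular_word {..<3 :: nat} (int r) w"
proof -
  obtain u where u: "length u = 3 ^ (r - 3) * 36" "regular_word {..<3 :: nat} (int r) u"
    using exists_regular_word_cyclic_prouhet[OF regular_word_ternary_36 _ assms(1), of 36] by auto
  obtain v where v: "length v = 3 ^ (r - 1) * 6" "regular_word {..<3 :: nat} (int r) v"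
    using exists_regular_word_cyclic_prouhet[OF regular_word_012210, of 6 r] assms(1) by auto
  have "\<exists>a b. k = 2 * a + 3 * b"
    using assms(2) by presburger
  then obtain a b where ab: "k = 2 * a + 3 * b"
    by blast
  have "r - 1 = Suc (Suc (r - 3))"
    using assms(1) by arith
  then have "length (concat (replicate a u) @ concat (replicate b v)) = 2 * k * 3 ^ (r - 1)"
    using u(1) v(1) ab by (simp add: length_concat sum_list_replicate algebra_simps)
  moreover have "regular_word {..<3 :: nat} (int r) (concat (replicate a u) @ concat (replicate b v))"
    using u(2) v(2) by (intro regular_word_append regular_word_concat_replicate)
  ultimately show ?thesis
    by blast
qed

theorem mainTheorem13:
  fixes r k :: nat and A :: "'a set"
  assumes "r \<ge> 3" and "k \<ge> 2" and "card A = 3"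
  shows "\<exists>u. length u = 2 * k * 3 ^ (r - 1) \<and> regular_word A (int r) u"
proof -
  obtain w where w: "length w = 2 * k * 3 ^ (r - 1)" "regular_word {..<3 :: nat} (int r) w"
    using exists_regular_word_ternary[OF assms(1,2)] by blast
  have "finite A"
    using assms(3) by (intro card_ge_0_finite) simp
  then obtain f where f: "bij_betw f {..<3 :: nat} A"
    using finite_same_card_bij[OF finite_lessThan] assms(3) by (metis card_lessThan)
  have "regular_word A (int r) (map f w)"
    using regular_word_map[OF w(2) bij_betw_imp_inj_on[OF f]] bij_betw_imp_surj_on[OF f] by simp
  then show ?thesis
    using w(1) by (intro exI[of _ "map f w"]) simp
qed

end
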